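(* Let $G$ be a finite simple graph on $n$ vertices and $v$ a vertex of $G$ of degree $d$. Then \[\max\{-d,\,-(n-d-1)\}\le \mathrm{mur}(G)-\mathrm{mur}(G\setminus\{v\})\le \min\{d+2,\,(n-d-1)+2\},\] where $G\setminus\{v\}$ is the graph obtained from $G$ by deleting $v$ and its incident edges.
   Context: For a finite simple undirected graph $G$ on vertices $v_1,\dots,v_n$, let $A_G$ be its $(0,1)$-adjacency matrix, $D_G=\mathrm{diag}(d_1,\dots,d_n)$ with $d_i$ the degree of $v_i$, $I$ the $n\times n$ identity matrix and $J$ the $n\times n$ all-ones matrix. A universal adjacency matrix of $G$ is any matrix $\alpha A_G+\beta I+\gamma J+\delta D_G$ with real scalars $\alpha,\beta,\gamma,\delta$ and $\alpha\neq 0$. The minimum universal rank $\mathrm{mur}(G)$ is the minimum rank over all universal adjacency matrices of $G$. *)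

theory Defs
  imports "Jordan_Normal_Form.DL_Rank"
begin

text \<open>A finite simple graph on the vertex set {0..<n}, given by an edge relation E
  that is symmetric and irreflexive on the vertex set (values outside are irrelevant).\<close>
definition simple_graph :: "nat \<Rightarrow> (nat \<Rightarrow> nat \<Rightarrow> bool) \<Rightarrow> bool" where
  "simple_graph n E \<longleftrightarrow> (\<forall>i<n. \<forall>j<n. E i j \<longleftrightarrow> E j i) \<and> (\<forall>i<n. \<not> E i i)"

definition degree :: "nat \<Rightarrow> (nat \<Rightarrow> nat \<Rightarrow> bool) \<Rightarrow> nat \<Rightarrow> nat" where
  "degree n E i = card {j. j < n \<and> E i j}"

definition adj_mat :: "nat \<Rightarrow> (nat \<Rightarrow> nat \<Rightarrow> bool) \<Rightarrow> real mat" where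
  "adj_mat n E = mat n n (\<lambda>(i,j). if E i j then 1 else 0)"

definition deg_mat :: "nat \<Rightarrow> (nat \<Rightarrow> nat \<Rightarrow> bool) \<Rightarrow> real mat" where
  "deg_mat n E = mat n n (\<lambda>(i,j). if i = j then real (degree n E i) else 0)"

definition ones_mat :: "nat \<Rightarrow> real mat" where
  "ones_mat n = mat n n (\<lambda>_. 1)"

definition universal_adj :: "nat \<Rightarrow> (nat \<Rightarrow> nat \<Rightarrow> bool) \<Rightarrow> real \<Rightarrow> real \<Rightarrow> real \<Rightarrow> real \<Rightarrow> real mat" where
  "universal_adj n E \<alpha> \<beta> \<gamma> \<delta> =
     \<alpha> \<cdot>\<^sub>m adj_mat n E + \<beta> \<cdot>\<^sub>m 1\<^sub>m n + \<gamma> \<cdot>\<^sub>m ones_mat n + \<delta> \<cdot>\<^sub>m deg_mat n E"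

definition mur :: "nat \<Rightarrow> (nat \<Rightarrow> nat \<Rightarrow> bool) \<Rightarrow> nat" where
  "mur n E = Min {vec_space.rank n (universal_adj n E \<alpha> \<beta> \<gamma> \<delta>) | \<alpha> \<beta> \<gamma> \<delta>. \<alpha> \<noteq> 0}"

text \<open>Deleting vertex v from a graph on {0..<n}: the result lives on {0..<n-1},
  with vertices relabelled order-preservingly (i \<mapsto> i if i < v, else i+1).\<close>
definition skip :: "nat \<Rightarrow> nat \<Rightarrow> nat" where
  "skip v i = (if i < v then i else Suc i)"

definition delete_vertex :: "nat \<Rightarrow> (nat \<Rightarrow> nat \<Rightarrow> bool) \<Rightarrow> (nat \<Rightarrow> nat \<Rightarrow> bool)" where
  "delete_vertex v E = (\<lambda>i j. E (skip v i) (skip v j))"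

end

theory Submission
  imports Defs
begin

text \<open>
  Fix parameters \<open>\<alpha>, \<beta>, \<gamma>, \<delta>\<close> and a real number \<open>c\<close>. Deleting the row and column of \<open>v\<close> from
  the universal adjacency matrix of \<open>G\<close> and adding the diagonal matrix with entries
  \<open>\<delta> (c - [u adjacent to v])\<close> yields the universal adjacency matrix of \<open>G - v\<close> with
  parameters \<open>\<alpha>, \<beta> + c \<delta>, \<gamma>, \<delta>\<close>. For \<open>c = 0\<close> that diagonal has at most \<open>d\<close> nonzero entries,
  for \<open>c = 1\<close> at most \<open>n - d - 1\<close>. Deleting a row and a column does not increase the rank and
  decreases it by at most 2, and adding a diagonal matrix with \<open>k\<close> nonzero entries raises
  the rank by at most \<open>k\<close>. Applying this to optimal parameters for \<open>G\<close>, respectively for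
  \<open>G - v\<close>, gives the four inequalities.
\<close>

lemma linear_image_in_span:
  fixes f :: "'a::field vec \<Rightarrow> 'a vec"
  assumes f_carrier: "\<And>x. x \<in> carrier_vec n \<Longrightarrow> f x \<in> carrier_vec m"
    and f_add: "\<And>x y. x \<in> carrier_vec n \<Longrightarrow> y \<in> carrier_vec n \<Longrightarrow> f (x + y) = f x + f y"
    and f_smult: "\<And>c x. x \<in> carrier_vec n \<Longrightarrow> f (c \<cdot>\<^sub>v x) = c \<cdot>\<^sub>v f x"
    and T: "T \<subseteq> carrier_vec n"
    and x: "x \<in> LinearCombinations.module.span class_ring (module_vec TYPE('a) n) T"
  shows "f x \<in> LinearCombinations.module.span class_ring (module_vec TYPE('a) m) (f ` T)"
proof -
  interpret N: vec_space "TYPE('a)" n .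
  interpret M: vec_space "TYPE('a)" m .
  have fT: "f ` T \<subseteq> carrier_vec m" using T f_carrier by auto
  obtain a A where x_eq: "x = N.lincomb a A" and A: "finite A" "A \<subseteq> T"
    using N.in_spanE[OF x] by blast
  have "f (N.lincomb a A) \<in> M.span (f ` T)" using A
  proof (induction A rule: finite_induct)
    case empty
    have "f (0\<^sub>v n) = f (0 \<cdot>\<^sub>v 0\<^sub>v n)" by simp
    also have "\<dots> = 0 \<cdot>\<^sub>v f (0\<^sub>v n)" using f_smult by blast
    also have "\<dots> = 0\<^sub>v m" using f_carrier[of "0\<^sub>v n"] by auto
    finally show ?case
      using submodule.zero_closed[OF M.span_is_submodule[OF fT]] by (simp add: N.lincomb_def)
  next
    case (insert y F)
    have y: "y \<in> carrier_vec n" and F: "F \<subseteq> carrier_vec n" using insert T by auto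
    have "N.lincomb a (insert y F) = a y \<cdot>\<^sub>v y + N.lincomb a F"
      using N.lincomb_insert[of F y a] insert y F by auto
    moreover have "N.lincomb a F \<in> carrier_vec n" using N.lincomb_closed F insert by auto
    ultimately have "f (N.lincomb a (insert y F)) = a y \<cdot>\<^sub>v f y + f (N.lincomb a F)"
      using f_add f_smult y by auto
    moreover have "a y \<cdot>\<^sub>v f y \<in> M.span (f ` T)"
      using M.smult_in_span[OF fT] M.span_mem[OF fT] insert by auto
    ultimately show ?case using M.span_add1[OF fT] insert by auto
  qed
  then show ?thesis using x_eq by simp
qed

lemma (in vec_space) cols_in_span_maximal_indpt:
  assumes A: "A \<in> carrier_mat n nc"
    and max: "maximal T (\<lambda>T. T \<subseteq> set (cols A) \<and> lin_indpt T)"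
  shows "set (cols A) \<subseteq> span T"
proof
  fix x assume x: "x \<in> set (cols A)"
  have T: "T \<subseteq> set (cols A)" "lin_indpt T" using max unfolding maximal_def by auto
  have cols: "set (cols A) \<subseteq> carrier_vec n" using A cols_dim by blast
  show "x \<in> span T"
  proof (rule ccontr)
    assume x_notin: "x \<notin> span T"
    then have "x \<notin> T" using span_mem T cols by blast
    then have "lin_indpt (T \<union> {x})"
      using lin_dep_iff_in_span[OF _ T(2) _ \<open>x \<notin> T\<close>] x_notin x T cols by auto
    moreover have "T \<union> {x} \<subseteq> set (cols A)" using T x by auto
    ultimately have "T = T \<union> {x}" using max unfolding maximal_def by blast
    with \<open>x \<notin> T\<close> show False by auto
  qed
qed

lemma (in vec_space) exists_maximal_indpt_cols:
  "\<exists>T. maximal T (\<lambda>T. T \<subseteq> set (cols A) \<and> lin_indpt T)"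
  using maximal_exists[of "\<lambda>T. T \<subseteq> set (cols A) \<and> lin_indpt T" "card (set (cols A))" "{}"]
  by (meson List.finite_set card_mono empty_iff empty_subsetI finite_lin_indpt2 rev_finite_subset)

lemma rank_le_if_cols_linear_image:
  fixes f :: "'a::field vec \<Rightarrow> 'a vec"
  assumes f_carrier: "\<And>x. x \<in> carrier_vec n \<Longrightarrow> f x \<in> carrier_vec m"
    and f_add: "\<And>x y. x \<in> carrier_vec n \<Longrightarrow> y \<in> carrier_vec n \<Longrightarrow> f (x + y) = f x + f y"
    and f_smult: "\<And>c x. x \<in> carrier_vec n \<Longrightarrow> f (c \<cdot>\<^sub>v x) = c \<cdot>\<^sub>v f x"
    and A: "A \<in> carrier_mat n k" and B: "B \<in> carrier_mat m l"
    and cols_B: "\<And>y. y \<in> set (cols B) \<Longrightarrow> y = 0\<^sub>v m \<or> (\<exists>x \<in> set (cols A). y = f x)"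
  shows "vec_space.rank m B \<le> vec_space.rank n A"
proof -
  interpret N: vec_space "TYPE('a)" n .
  interpret M: vec_space "TYPE('a)" m .
  obtain T where max_T: "maximal T (\<lambda>T. T \<subseteq> set (cols A) \<and> N.lin_indpt T)"
    using N.exists_maximal_indpt_cols by blast
  obtain U where max_U: "maximal U (\<lambda>T. T \<subseteq> set (cols B) \<and> M.lin_indpt T)"
    using M.exists_maximal_indpt_cols by blast
  have T: "T \<subseteq> set (cols A)" and U: "U \<subseteq> set (cols B)" "M.lin_indpt U"
    using max_T max_U unfolding maximal_def by auto
  have T_carrier: "T \<subseteq> carrier_vec n" using T A cols_dim by blast
  have fT: "f ` T \<subseteq> carrier_vec m" using T_carrier f_carrier by auto
  have finite_T: "finite T" and finite_U: "finite U"
    using T U(1) finite_subset by auto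
  have "U \<subseteq> M.span (f ` T)"
  proof
    fix y assume "y \<in> U"
    with cols_B U consider "y = 0\<^sub>v m" | x where "x \<in> set (cols A)" "y = f x" by blast
    then show "y \<in> M.span (f ` T)"
    proof cases
      case 1
      then show ?thesis using submodule.zero_closed[OF M.span_is_submodule[OF fT]] by simp
    next
      case 2
      then show ?thesis
        using linear_image_in_span[OF f_carrier f_add f_smult T_carrier]
          N.cols_in_span_maximal_indpt[OF A max_T] by blast
    qed
  qed
  then obtain C :: "'a vec set" where "int (card C) \<le> int (card (f ` T)) - int (card U)"
    using M.replacement[OF finite_U finite_imageI[OF finite_T] fT U(2)] by blast
  then have "card U \<le> card (f ` T)" by linarith
  also have "\<dots> \<le> card T" using card_image_le[OF finite_T] .
  finally show ?thesis
    using N.rank_card_indpt[OF A max_T] M.rank_card_indpt[OF B max_U] by simp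
qed

lemma in_set_colsE:
  assumes "y \<in> set (cols A)" obtains j where "j < dim_col A" "y = col A j"
  using assms by (metis cols_length cols_nth in_set_conv_nth)

lemma col_in_set_cols: "j < dim_col A \<Longrightarrow> col A j \<in> set (cols A)"
  by (metis cols_length cols_nth nth_mem)

definition unskip :: "nat \<Rightarrow> nat \<Rightarrow> nat" where
  "unskip v i = (if i < v then i else i - 1)"

lemma skip_less: "v < n \<Longrightarrow> i < n - 1 \<Longrightarrow> skip v i < n"
  by (auto simp: skip_def)

lemma skip_neq: "skip v i \<noteq> v"
  by (auto simp: skip_def)

lemma skip_inject: "skip v i = skip v j \<longleftrightarrow> i = j"
  by (auto simp: skip_def)

lemma skip_unskip: "i \<noteq> v \<Longrightarrow> skip v (unskip v i) = i"
  by (auto simp: skip_def unskip_def)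

lemma unskip_less: "v < n \<Longrightarrow> i < n \<Longrightarrow> i \<noteq> v \<Longrightarrow> unskip v i < n - 1"
  by (auto simp: unskip_def)

lemma card_skip:
  assumes v: "v < n"
  shows "card {i. i < n - 1 \<and> P (skip v i)} = card {k. k < n \<and> k \<noteq> v \<and> P k}"
proof (rule bij_betw_same_card[of "skip v"], rule bij_betw_imageI)
  show "inj_on (skip v) {i. i < n - 1 \<and> P (skip v i)}"
    by (auto simp: inj_on_def skip_inject)
  have "k \<in> skip v ` {i. i < n - 1 \<and> P (skip v i)}" if "k < n" "k \<noteq> v" "P k" for k
    using that unskip_less[OF v] skip_unskip by (metis (mono_tags, lifting) image_eqI mem_Collect_eq)
  then show "skip v ` {i. i < n - 1 \<and> P (skip v i)} = {k. k < n \<and> k \<noteq> v \<and> P k}"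
    using skip_less[OF v] skip_neq by auto
qed

definition delete_row_col :: "nat \<Rightarrow> 'a mat \<Rightarrow> 'a mat" where
  "delete_row_col v A = mat (dim_row A - 1) (dim_col A - 1) (\<lambda>(i, j). A $$ (skip v i, skip v j))"

lemma delete_row_col_carrier:
  "A \<in> carrier_mat n n \<Longrightarrow> delete_row_col v A \<in> carrier_mat (n - 1) (n - 1)"
  by (simp add: delete_row_col_def)

lemma rank_delete_row_col_le:
  fixes A :: "'a::field mat"
  assumes A: "A \<in> carrier_mat n n" and v: "v < n"
  shows "vec_space.rank (n - 1) (delete_row_col v A) \<le> vec_space.rank n A"
proof (rule rank_le_if_cols_linear_image[where f = "\<lambda>w. vec (n - 1) (\<lambda>i. w $ skip v i)"])
  fix y assume "y \<in> set (cols (delete_row_col v A))"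
  then obtain j where j: "j < n - 1" "y = col (delete_row_col v A) j"
    using A by (auto simp: delete_row_col_def elim: in_set_colsE)
  then have "y = vec (n - 1) (\<lambda>i. col A (skip v j) $ skip v i)"
    using A skip_less[OF v] by (auto simp: delete_row_col_def)
  moreover have "col A (skip v j) \<in> set (cols A)"
    using A skip_less[OF v j(1)] col_in_set_cols by auto
  ultimately show "y = 0\<^sub>v (n - 1) \<or> (\<exists>x\<in>set (cols A). y = vec (n - 1) (\<lambda>i. x $ skip v i))"
    by blast
qed (use A v skip_less delete_row_col_carrier in auto)

text \<open>
  Outside row and column \<open>v\<close>, \<open>A\<close> is the submatrix padded with zeros; what remains is a
  matrix supported on row \<open>v\<close> plus one supported on column \<open>v\<close>, each of rank at most 1.
\<close>
lemma rank_le_rank_delete_row_col: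
  fixes A :: "'a::field mat"
  assumes A: "A \<in> carrier_mat n n" and v: "v < n"
  shows "vec_space.rank n A \<le> vec_space.rank (n - 1) (delete_row_col v A) + 2"
proof -
  define S where "S = delete_row_col v A"
  define P where "P = mat n n (\<lambda>(i, j). if i = v \<or> j = v then 0 else S $$ (unskip v i, unskip v j))"
  define R where "R = mat n n (\<lambda>(i, j). of_bool (i = v) * A $$ (v, j))"
  define C where "C = mat n n (\<lambda>(i, j). (if i = v then 0 else A $$ (i, v)) * of_bool (j = v))"
  have S: "S \<in> carrier_mat (n - 1) (n - 1)" using A by (simp add: S_def delete_row_col_def)
  have A_split: "A = P + (R + C)"
  proof (rule eq_matI)
    fix i j assume "i < dim_row (P + (R + C))" "j < dim_col (P + (R + C))"
    then have ij: "i < n" "j < n" by (auto simp: P_def R_def C_def)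
    show "A $$ (i, j) = (P + (R + C)) $$ (i, j)"
    proof (cases "i = v \<or> j = v")
      case True
      then show ?thesis using ij by (auto simp: P_def R_def C_def)
    next
      case False
      then have "unskip v i < n - 1" "unskip v j < n - 1" using unskip_less[OF v] ij by auto
      then show ?thesis
        using False ij A by (auto simp: P_def R_def C_def S_def delete_row_col_def skip_unskip)
    qed
  qed (use A in \<open>auto simp: P_def R_def C_def\<close>)
  have "vec_space.rank n A \<le> vec_space.rank n P + vec_space.rank n (R + C)"
    unfolding A_split by (rule vec_space.rank_subadditive[where nc = n]) (auto simp: P_def R_def C_def)
  also have "vec_space.rank n (R + C) \<le> vec_space.rank n R + vec_space.rank n C"
    by (rule vec_space.rank_subadditive[where nc = n]) (auto simp: R_def C_def)
  also have "vec_space.rank n R \<le> 1"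
    by (rule vec_space.rank_le_1_product_entries[where nc = n and f = "\<lambda>i. of_bool (i = v)"
          and g = "\<lambda>j. A $$ (v, j)"]) (auto simp: R_def)
  also have "vec_space.rank n C \<le> 1"
    by (rule vec_space.rank_le_1_product_entries[where nc = n
          and f = "\<lambda>i. if i = v then 0 else A $$ (i, v)" and g = "\<lambda>j. of_bool (j = v)"])
      (auto simp: C_def)
  also have "vec_space.rank n P \<le> vec_space.rank (n - 1) S"
  proof (rule rank_le_if_cols_linear_image[where f = "\<lambda>w. vec n (\<lambda>i. if i = v then 0 else w $ unskip v i)", OF _ _ _ S])
    fix y assume "y \<in> set (cols P)"
    then obtain j where j: "j < n" "y = col P j" by (auto simp: P_def elim: in_set_colsE)
    show "y = 0\<^sub>v n \<or> (\<exists>x\<in>set (cols S). y = vec n (\<lambda>i. if i = v then 0 else x $ unskip v i))"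
    proof (cases "j = v")
      case True
      then show ?thesis using j by (auto simp: P_def)
    next
      case False
      then have j': "unskip v j < n - 1" using unskip_less[OF v] j by auto
      then have "y = vec n (\<lambda>i. if i = v then 0 else col S (unskip v j) $ unskip v i)"
        using j False S unskip_less[OF v] by (auto simp: P_def)
      moreover have "col S (unskip v j) \<in> set (cols S)" using S j' by (intro col_in_set_cols) auto
      ultimately show ?thesis by blast
    qed
  qed (auto intro!: eq_vecI simp: unskip_less[OF v, simplified] P_def)
  finally show ?thesis by (simp add: S_def)
qed

lemma rank_mat_diag_le:
  fixes g :: "nat \<Rightarrow> 'a::field"
  shows "vec_space.rank k (mat_diag k g) \<le> card {i. i < k \<and> g i \<noteq> 0}"
proof -
  have restricted: "vec_space.rank k (mat_diag k (\<lambda>i. if i \<in> K then g i else 0)) \<le> card K"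
    if "finite K" for K
    using that
  proof (induction K rule: finite_induct)
    case empty
    have "mat_diag k (\<lambda>i. if i \<in> {} then g i else 0) = 0\<^sub>m k k"
      by (rule eq_matI) (auto simp: mat_diag_def)
    then show ?case by (simp add: vec_space.rank_0I)
  next
    case (insert x F)
    define D where "D = mat_diag k (\<lambda>i. if i \<in> F then g i else 0)"
    define B where "B = mat k k (\<lambda>(i, j). (if i = x then g x else 0) * of_bool (j = x))"
    have "mat_diag k (\<lambda>i. if i \<in> insert x F then g i else 0) = D + B"
      by (rule eq_matI) (use insert in \<open>auto simp: D_def B_def mat_diag_def\<close>)
    moreover have "vec_space.rank k (D + B) \<le> vec_space.rank k D + vec_space.rank k B"
      by (rule vec_space.rank_subadditive[where nc = k]) (auto simp: D_def B_def)
    moreover have "vec_space.rank k B \<le> 1"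
      by (rule vec_space.rank_le_1_product_entries[where nc = k
            and f = "\<lambda>i. if i = x then g x else 0" and g = "\<lambda>j. of_bool (j = x)"]) (auto simp: B_def)
    ultimately show ?case using insert D_def by simp
  qed
  have "mat_diag k g = mat_diag k (\<lambda>i. if i \<in> {i. i < k \<and> g i \<noteq> 0} then g i else 0)"
    by (rule eq_matI) (auto simp: mat_diag_def)
  then show ?thesis using restricted[of "{i. i < k \<and> g i \<noteq> 0}"] by simp
qed

lemma rank_add_mat_diag_le:
  fixes g :: "nat \<Rightarrow> 'a::field"
  assumes A: "A \<in> carrier_mat k k"
  shows "vec_space.rank k (A + mat_diag k g) \<le> vec_space.rank k A + card {i. i < k \<and> g i \<noteq> 0}"
  using vec_space.rank_subadditive[OF A mat_diag_dim[of k g]] rank_mat_diag_le[of k g] by linarith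

lemma universal_adj_carrier: "universal_adj k E \<alpha> \<beta> \<gamma> \<delta> \<in> carrier_mat k k"
  by (simp add: universal_adj_def adj_mat_def deg_mat_def ones_mat_def)

lemma degree_skip:
  assumes v: "v < n"
  shows "degree n E (skip v i) = degree (n - 1) (delete_vertex v E) i + of_bool (E (skip v i) v)"
proof -
  let ?u = "skip v i"
  have "degree (n - 1) (delete_vertex v E) i = card {k. k < n \<and> k \<noteq> v \<and> E ?u k}"
    unfolding degree_def delete_vertex_def using card_skip[OF v, of "E ?u"] by simp
  moreover have "{k. k < n \<and> E ?u k} = {k. k < n \<and> k \<noteq> v \<and> E ?u k} \<union> (if E ?u v then {v} else {})"
    using v by auto
  ultimately show ?thesis unfolding degree_def by (auto simp: card_insert_if)
qed

text \<open>The diagonal term absorbs both the shift of \<open>\<beta>\<close> and the drop by one of the degree of each neighbour of \<open>v\<close>.\<close>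
lemma universal_adj_delete_vertex:
  assumes v: "v < n"
  shows "universal_adj (n - 1) (delete_vertex v E) \<alpha> (\<beta> + c * \<delta>) \<gamma> \<delta>
     = delete_row_col v (universal_adj n E \<alpha> \<beta> \<gamma> \<delta>)
       + mat_diag (n - 1) (\<lambda>i. \<delta> * (c - of_bool (E (skip v i) v)))" (is "?L = ?R")
proof (rule eq_matI)
  fix i j assume "i < dim_row ?R" "j < dim_col ?R"
  then have ij: "i < n - 1" "j < n - 1" by (auto simp: mat_diag_def)
  then have "skip v i < n" "skip v j < n" using skip_less[OF v] by auto
  with ij show "?L $$ (i, j) = ?R $$ (i, j)"
    using degree_skip[OF v, of E i] universal_adj_carrier[of n E \<alpha> \<beta> \<gamma> \<delta>]
    by (auto simp: universal_adj_def delete_row_col_def adj_mat_def deg_mat_def ones_mat_def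
        mat_diag_def delete_vertex_def skip_inject algebra_simps)
qed (auto simp: universal_adj_def delete_row_col_def adj_mat_def deg_mat_def ones_mat_def mat_diag_def)

lemma card_nonzero_scaled_le:
  "card {i. i < (k::nat) \<and> \<delta> * (c - of_bool (P i)) \<noteq> (0::real)} \<le> card {i. i < k \<and> c \<noteq> of_bool (P i)}"
  by (rule card_mono[OF finite_subset[of _ "{..<k}"]]) auto

lemma rank_universal_adj_delete_vertex_le:
  assumes v: "v < n"
  shows "vec_space.rank (n - 1) (universal_adj (n - 1) (delete_vertex v E) \<alpha> (\<beta> + c * \<delta>) \<gamma> \<delta>)
     \<le> vec_space.rank n (universal_adj n E \<alpha> \<beta> \<gamma> \<delta>) + card {i. i < n - 1 \<and> c \<noteq> of_bool (E (skip v i) v)}"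
proof -
  let ?A = "universal_adj n E \<alpha> \<beta> \<gamma> \<delta>"
  let ?D = "mat_diag (n - 1) (\<lambda>i. \<delta> * (c - of_bool (E (skip v i) v)))"
  have "vec_space.rank (n - 1) (delete_row_col v ?A + ?D)
     \<le> vec_space.rank (n - 1) (delete_row_col v ?A) + card {i. i < n - 1 \<and> \<delta> * (c - of_bool (E (skip v i) v)) \<noteq> 0}"
    by (rule rank_add_mat_diag_le[OF delete_row_col_carrier[OF universal_adj_carrier]])
  moreover have "vec_space.rank (n - 1) (delete_row_col v ?A) \<le> vec_space.rank n ?A"
    by (rule rank_delete_row_col_le[OF universal_adj_carrier v])
  ultimately show ?thesis
    unfolding universal_adj_delete_vertex[OF v] using card_nonzero_scaled_le[of "n - 1" \<delta> c "\<lambda>i. E (skip v i) v"] by linarith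
qed

lemma rank_universal_adj_le_delete_vertex:
  assumes v: "v < n"
  shows "vec_space.rank n (universal_adj n E \<alpha> \<beta> \<gamma> \<delta>)
     \<le> vec_space.rank (n - 1) (universal_adj (n - 1) (delete_vertex v E) \<alpha> (\<beta> + c * \<delta>) \<gamma> \<delta>)
       + card {i. i < n - 1 \<and> c \<noteq> of_bool (E (skip v i) v)} + 2"
proof -
  let ?A = "universal_adj n E \<alpha> \<beta> \<gamma> \<delta>"
  let ?B = "universal_adj (n - 1) (delete_vertex v E) \<alpha> (\<beta> + c * \<delta>) \<gamma> \<delta>"
  let ?D = "mat_diag (n - 1) (\<lambda>i. - \<delta> * (c - of_bool (E (skip v i) v)))"
  have split: "delete_row_col v ?A = ?B + ?D"
    unfolding universal_adj_delete_vertex[OF v]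
    by (rule eq_matI) (auto simp: mat_diag_def delete_row_col_def carrier_matD[OF universal_adj_carrier])
  moreover have "vec_space.rank (n - 1) (?B + ?D)
     \<le> vec_space.rank (n - 1) ?B + card {i. i < n - 1 \<and> - \<delta> * (c - of_bool (E (skip v i) v)) \<noteq> 0}"
    by (rule rank_add_mat_diag_le[OF universal_adj_carrier])
  moreover have "vec_space.rank n ?A \<le> vec_space.rank (n - 1) (?B + ?D) + 2"
    using rank_le_rank_delete_row_col[OF universal_adj_carrier[of n E \<alpha> \<beta> \<gamma> \<delta>] v] unfolding split .
  ultimately show ?thesis using card_nonzero_scaled_le[of "n - 1" "- \<delta>" c "\<lambda>i. E (skip v i) v"]
    by linarith
qed

lemma finite_universal_ranks:
  "finite {vec_space.rank k (universal_adj k E \<alpha> \<beta> \<gamma> \<delta>) | \<alpha> \<beta> \<gamma> \<delta>. \<alpha> \<noteq> 0}"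
  by (rule finite_subset[of _ "{..k}"]) (auto intro: vec_space.rank_le_nc[OF universal_adj_carrier])

lemma mur_le_rank:
  "\<alpha> \<noteq> 0 \<Longrightarrow> mur k E \<le> vec_space.rank k (universal_adj k E \<alpha> \<beta> \<gamma> \<delta>)"
  unfolding mur_def by (rule Min_le[OF finite_universal_ranks]) blast

lemma mur_attained:
  obtains \<alpha> \<beta> \<gamma> \<delta> where "\<alpha> \<noteq> 0" "mur k E = vec_space.rank k (universal_adj k E \<alpha> \<beta> \<gamma> \<delta>)"
proof -
  have "{vec_space.rank k (universal_adj k E \<alpha> \<beta> \<gamma> \<delta>) | \<alpha> \<beta> \<gamma> \<delta>. \<alpha> \<noteq> (0::real)} \<noteq> {}"
    by (metis (mono_tags, lifting) empty_iff mem_Collect_eq zero_neq_one)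
  then have "mur k E \<in> {vec_space.rank k (universal_adj k E \<alpha> \<beta> \<gamma> \<delta>) | \<alpha> \<beta> \<gamma> \<delta>. \<alpha> \<noteq> 0}"
    unfolding mur_def by (rule Min_in[OF finite_universal_ranks])
  then show ?thesis using that by blast
qed

lemma mur_delete_vertex_bounds:
  fixes c :: real and E :: "nat \<Rightarrow> nat \<Rightarrow> bool"
  assumes v: "v < n"
  defines "N \<equiv> card {i. i < n - 1 \<and> c \<noteq> of_bool (E (skip v i) v)}"
  shows "mur (n - 1) (delete_vertex v E) \<le> mur n E + N"
    and "mur n E \<le> mur (n - 1) (delete_vertex v E) + N + 2"
proof -
  obtain \<alpha> \<beta> \<gamma> \<delta> where "\<alpha> \<noteq> 0" "mur n E = vec_space.rank n (universal_adj n E \<alpha> \<beta> \<gamma> \<delta>)"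
    using mur_attained by blast
  then show "mur (n - 1) (delete_vertex v E) \<le> mur n E + N"
    using mur_le_rank[of \<alpha> "n - 1" "delete_vertex v E" "\<beta> + c * \<delta>" \<gamma> \<delta>]
      rank_universal_adj_delete_vertex_le[OF v, of E \<alpha> \<beta> c \<delta> \<gamma>] unfolding N_def by linarith
next
  obtain \<alpha> \<beta> \<gamma> \<delta> where "\<alpha> \<noteq> 0"
    and "mur (n - 1) (delete_vertex v E) = vec_space.rank (n - 1) (universal_adj (n - 1) (delete_vertex v E) \<alpha> \<beta> \<gamma> \<delta>)"
    using mur_attained by blast
  \<comment> \<open>Shift \<open>\<beta>\<close> back by \<open>c \<delta>\<close> so that the deleted graph's optimal parameters reappear.\<close>
  then show "mur n E \<le> mur (n - 1) (delete_vertex v E) + N + 2"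
    using mur_le_rank[of \<alpha> n E "\<beta> - c * \<delta>" \<gamma> \<delta>]
      rank_universal_adj_le_delete_vertex[OF v, of E \<alpha> "\<beta> - c * \<delta>" \<gamma> \<delta> c] unfolding N_def by simp
qed

lemma card_skip_neighbours:
  assumes G: "simple_graph n E" and v: "v < n"
  shows "card {i. i < n - 1 \<and> E (skip v i) v} = degree n E v"
proof -
  have "card {i. i < n - 1 \<and> E (skip v i) v} = card {k. k < n \<and> k \<noteq> v \<and> E k v}"
    by (rule card_skip[OF v])
  also have "{k. k < n \<and> k \<noteq> v \<and> E k v} = {k. k < n \<and> E v k}"
    using G v unfolding simple_graph_def by auto
  finally show ?thesis unfolding degree_def .
qed

lemma card_skip_non_neighbours:
  assumes G: "simple_graph n E" and v: "v < n"
  shows "card {i. i < n - 1 \<and> \<not> E (skip v i) v} + degree n E v = n - 1"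
proof -
  have "card {i. i < n - 1 \<and> \<not> E (skip v i) v} = card ({..<n - 1} - {i. i < n - 1 \<and> E (skip v i) v})"
    by (rule arg_cong[where f = card]) auto
  also have "\<dots> = (n - 1) - card {i. i < n - 1 \<and> E (skip v i) v}"
    by (subst card_Diff_subset) auto
  finally have "card {i. i < n - 1 \<and> \<not> E (skip v i) v} = (n - 1) - card {i. i < n - 1 \<and> E (skip v i) v}" .
  moreover have "card {i. i < n - 1 \<and> E (skip v i) v} \<le> n - 1"
    by (rule order_trans[OF card_mono[of "{..<n - 1}"]]) auto
  ultimately show ?thesis using card_skip_neighbours[OF G v] by simp
qed

theorem corollary18:
  fixes n v :: nat and E :: "nat \<Rightarrow> nat \<Rightarrow> bool"
  assumes "simple_graph n E" and "v < n"
  defines "d \<equiv> int (degree n E v)"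
  shows "max (- d) (- (int n - d - 1)) \<le> int (mur n E) - int (mur (n - 1) (delete_vertex v E))
       \<and> int (mur n E) - int (mur (n - 1) (delete_vertex v E)) \<le> min (d + 2) ((int n - d - 1) + 2)"
proof -
  have neighbours: "card {i. i < n - 1 \<and> (0::real) \<noteq> of_bool (E (skip v i) v)} = degree n E v"
    using card_skip_neighbours[OF assms(1,2)] by simp
  have non_neighbours: "card {i. i < n - 1 \<and> (1::real) \<noteq> of_bool (E (skip v i) v)} + degree n E v = n - 1"
    using card_skip_non_neighbours[OF assms(1,2)] by simp
  show ?thesis
    using mur_delete_vertex_bounds[OF assms(2), where c = 0 and E = E]
      mur_delete_vertex_bounds[OF assms(2), where c = 1 and E = E]
      neighbours non_neighbours assms(2) unfolding d_def by linarith
qed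

end
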